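(* Consider the critical discount factor \[\delta^*(p,c,\beta)=\frac{p-2c}{p-\beta p^2+p^2}\] on the admissible region of parameters $p\in(0,1]$, constant cost $c\ge0$ (not depending on $p$), $\beta<1$, satisfying $c<\frac12p+\frac12(\beta-1)p^2$. Then: (i) $\delta^*$ is strictly decreasing in $c$; (ii) $\delta^*$ is strictly increasing in $\beta$; (iii) $\delta^*$ is not monotone in $p$: the partial derivative $\partial\delta^*/\partial p$ is positive at some admissible parameter points and negative at others.
   Context: $\delta^*$ is the threshold discount factor above which two symmetric players in an infinitely repeated Prisoners' Dilemma of ranking-manipulation attacks sustain cooperation under the grim trigger strategy; $p$ is the attack success probability, $c$ the per-period attack cost, $\beta$ the market degradation factor under mutual successful attacks. The inequality $c<\frac12p+\frac12(\beta-1)p^2$ is the standing assumption guaranteeing the Prisoners' Dilemma payoff ordering. *)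

theory Defs
  imports Complex_Main
begin

definition delta_star :: "real \<Rightarrow> real \<Rightarrow> real \<Rightarrow> real" where
  "delta_star p c \<beta> = (p - 2 * c) / (p - \<beta> * p^2 + p^2)"

definition admissible :: "real \<Rightarrow> real \<Rightarrow> real \<Rightarrow> bool" where
  "admissible p c \<beta> \<longleftrightarrow> 0 < p \<and> p \<le> 1 \<and> 0 \<le> c \<and> \<beta> < 1 \<and>
     c < p / 2 + (\<beta> - 1) * p^2 / 2"

end

theory Submission
  imports Defs
begin

text \<open>The denominator of \<open>\<delta>*\<close> is \<open>p (1 + (1 - \<beta>) p) > 0\<close>, and admissibility gives
  \<open>p - 2c > (1 - \<beta>) p\<^sup>2 > 0\<close> for the numerator. Hence \<open>\<delta>*\<close> decreases in \<open>c\<close>, and it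
  increases in \<open>\<beta>\<close> because the denominator decreases in \<open>\<beta>\<close>. The derivative in \<open>p\<close> has the
  sign of \<open>2c (1 + 2(1 - \<beta>) p) - (1 - \<beta>) p\<^sup>2\<close>: negative for \<open>c = 0\<close>, positive for
  \<open>p = 1, c = 1/10, \<beta> = 9/10\<close>.\<close>

lemma delta_star_denominator_pos:
  fixes p \<beta> :: real
  assumes "0 < p" "\<beta> < 1"
  shows "0 < p - \<beta> * p^2 + p^2"
proof -
  have "p - \<beta> * p^2 + p^2 = p + (1 - \<beta>) * p^2" by (simp add: algebra_simps)
  moreover have "0 < (1 - \<beta>) * p^2" using assms by simp
  ultimately show ?thesis using assms(1) by linarith
qed

lemma admissible_numerator_pos:
  assumes "admissible p c \<beta>"
  shows "0 < p - 2 * c"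
proof -
  have "(\<beta> - 1) * p^2 < 0" using assms by (simp add: admissible_def mult_neg_pos)
  then show ?thesis using assms by (simp add: admissible_def)
qed

lemma delta_star_strict_antimono_cost:
  assumes "0 < p" "\<beta> < 1" "c1 < c2"
  shows "delta_star p c2 \<beta> < delta_star p c1 \<beta>"
  unfolding delta_star_def
  using assms delta_star_denominator_pos[OF assms(1,2)] by (simp add: divide_strict_right_mono)

lemma delta_star_strict_mono_beta:
  assumes "0 < p" "0 < p - 2 * c" "\<beta>1 < \<beta>2" "\<beta>2 < 1"
  shows "delta_star p c \<beta>1 < delta_star p c \<beta>2"
proof -
  have "p - \<beta>2 * p^2 + p^2 < p - \<beta>1 * p^2 + p^2"
    using assms by (simp add: algebra_simps)
  then show ?thesis
    unfolding delta_star_def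
    using assms(2) delta_star_denominator_pos[OF assms(1,4)] by (simp add: frac_less2)
qed

lemma has_real_derivative_delta_star:
  fixes p c \<beta> :: real
  assumes "0 < p" "\<beta> < 1"
  shows "((\<lambda>q. delta_star q c \<beta>) has_real_derivative
           (2 * c * (1 + 2 * (1 - \<beta>) * p) - (1 - \<beta>) * p^2) / (p - \<beta> * p^2 + p^2)^2) (at p)"
proof -
  have "((\<lambda>q. (q - 2 * c) / (q - \<beta> * q^2 + q^2)) has_real_derivative
          ((p - \<beta> * p^2 + p^2) - (p - 2 * c) * (1 - \<beta> * (2 * p) + 2 * p))
            / (p - \<beta> * p^2 + p^2)^2) (at p)"
    using delta_star_denominator_pos[OF assms]
    by (auto intro!: derivative_eq_intros simp: power2_eq_square)
  moreover have "(p - \<beta> * p^2 + p^2) - (p - 2 * c) * (1 - \<beta> * (2 * p) + 2 * p)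
                   = 2 * c * (1 + 2 * (1 - \<beta>) * p) - (1 - \<beta>) * p^2"
    by (simp add: algebra_simps power2_eq_square)
  ultimately show ?thesis unfolding delta_star_def[abs_def] by simp
qed

theorem theorem2:
  shows "(\<forall>p \<beta> c1 c2. admissible p c1 \<beta> \<and> admissible p c2 \<beta> \<and> c1 < c2
            \<longrightarrow> delta_star p c2 \<beta> < delta_star p c1 \<beta>)
     \<and> (\<forall>p c \<beta>1 \<beta>2. admissible p c \<beta>1 \<and> admissible p c \<beta>2 \<and> \<beta>1 < \<beta>2
            \<longrightarrow> delta_star p c \<beta>1 < delta_star p c \<beta>2)
     \<and> (\<exists>p c \<beta> D. admissible p c \<beta> \<and>
            ((\<lambda>q. delta_star q c \<beta>) has_real_derivative D) (at p) \<and> D > 0)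
     \<and> (\<exists>p c \<beta> D. admissible p c \<beta> \<and>
            ((\<lambda>q. delta_star q c \<beta>) has_real_derivative D) (at p) \<and> D < 0)"
proof (intro conjI)
  show "\<forall>p \<beta> c1 c2. admissible p c1 \<beta> \<and> admissible p c2 \<beta> \<and> c1 < c2
          \<longrightarrow> delta_star p c2 \<beta> < delta_star p c1 \<beta>"
    by (auto simp: admissible_def intro: delta_star_strict_antimono_cost)
  show "\<forall>p c \<beta>1 \<beta>2. admissible p c \<beta>1 \<and> admissible p c \<beta>2 \<and> \<beta>1 < \<beta>2
          \<longrightarrow> delta_star p c \<beta>1 < delta_star p c \<beta>2"
    by (meson admissible_def admissible_numerator_pos delta_star_strict_mono_beta)
  show "\<exists>p c \<beta> D. admissible p c \<beta> \<and>
          ((\<lambda>q. delta_star q c \<beta>) has_real_derivative D) (at p) \<and> D > 0"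
  proof (intro exI conjI)
    show "admissible 1 (1/10) (9/10)" by (simp add: admissible_def)
  qed (rule has_real_derivative_delta_star, simp_all)
  show "\<exists>p c \<beta> D. admissible p c \<beta> \<and>
          ((\<lambda>q. delta_star q c \<beta>) has_real_derivative D) (at p) \<and> D < 0"
  proof (intro exI conjI)
    show "admissible (1/2) 0 0" by (simp add: admissible_def power2_eq_square)
  qed (rule has_real_derivative_delta_star, simp_all add: power2_eq_square)
qed

end
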